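(* Let $\Lambda>1$. Then there exists at most one solution, modulo translations in $z$, of \[ -v_1''+v_1^3-v_1+\Lambda v_2^2v_1=0,\qquad -v_2''+v_2^3-v_2+\Lambda v_1^2v_2=0,\qquad z\in\mathbb{R}, \] \[ (v_1,v_2)\to(0,1)\ \text{as } z\to-\infty,\qquad (v_1,v_2)\to(1,0)\ \text{as } z\to+\infty, \] such that both $v_1$ and $v_2$ are positive and at least one of $v_1,v_2$ is strictly monotone on $\mathbb{R}$. *)

theory Defs
  imports "HOL-Analysis.Analysis"
begin

definition strictly_monotone :: "(real \<Rightarrow> real) \<Rightarrow> bool" where
  "strictly_monotone v \<longleftrightarrow>
     (\<forall>x y. x < y \<longrightarrow> v x < v y) \<or> (\<forall>x y. x < y \<longrightarrow> v x > v y)"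

definition is_system_solution :: "real \<Rightarrow> (real \<Rightarrow> real) \<Rightarrow> (real \<Rightarrow> real) \<Rightarrow> bool" where
  "is_system_solution L v1 v2 \<longleftrightarrow>
     (\<exists>d1 dd1 d2 dd2.
        \<forall>z. (v1 has_real_derivative d1 z) (at z) \<and> (d1 has_real_derivative dd1 z) (at z) \<and>
            (v2 has_real_derivative d2 z) (at z) \<and> (d2 has_real_derivative dd2 z) (at z) \<and>
            - dd1 z + (v1 z)^3 - v1 z + L * (v2 z)^2 * v1 z = 0 \<and>
            - dd2 z + (v2 z)^3 - v2 z + L * (v1 z)^2 * v2 z = 0)"

definition admissible :: "real \<Rightarrow> (real \<Rightarrow> real) \<Rightarrow> (real \<Rightarrow> real) \<Rightarrow> bool" where
  "admissible L v1 v2 \<longleftrightarrow>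
     is_system_solution L v1 v2 \<and>
     (v1 \<longlongrightarrow> 0) at_bot \<and> (v2 \<longlongrightarrow> 1) at_bot \<and>
     (v1 \<longlongrightarrow> 1) at_top \<and> (v2 \<longlongrightarrow> 0) at_top \<and>
     (\<forall>z. v1 z > 0 \<and> v2 z > 0) \<and>
     (strictly_monotone v1 \<or> strictly_monotone v2)"

end

theory Submission
  imports Defs
begin

text \<open>
  The proof is by the sliding method.  Pairs of profiles are compared in the order
  \<open>u \<preceq> y\<close> iff \<open>u\<^sub>1 \<le> y\<^sub>1\<close> and \<open>y\<^sub>2 \<le> u\<^sub>2\<close>, for which the system is cooperative.
  Near the two equilibria, and only because \<open>\<Lambda> > 1\<close>, the nonlinearity has the sign
  needed for a maximum principle: if \<open>u \<preceq> y\<close> holds on a compact interval, strictly, and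
  both pairs are close to the equilibria outside it, then \<open>u \<preceq> y\<close> holds everywhere.
  Hence \<open>u \<preceq> v(\<cdot> + \<sigma>)\<close> for all large shifts \<open>\<sigma>\<close>.  At the least such shift \<open>\<tau>\<close> the order
  cannot be strict (otherwise compactness lets us slide further), so a component of
  \<open>u\<close> touches the corresponding component of \<open>v(\<cdot> + \<tau>)\<close>.  At the touching point the
  difference has a double zero, and uniqueness for the initial value problem gives
  \<open>u = v(\<cdot> + \<tau>)\<close>.
\<close>

definition reaction :: "real \<Rightarrow> real \<Rightarrow> real \<Rightarrow> real" where
  "reaction L a b = a^3 - a + L * b^2 * a"

definition transfer_slope :: "real \<Rightarrow> real \<Rightarrow> real \<Rightarrow> real \<Rightarrow> real" where
  "transfer_slope L a b t = 1 - 3*a^2 + 3*a*t - t^2 + L*(2*a*b - b^2 - 2*b*t + a*t - t^2)"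

lemma reaction_transfer:
  "reaction L (a - t) (b + t) = reaction L a b + t * transfer_slope L a b t"
  unfolding reaction_def transfer_slope_def
  by (simp add: power2_eq_square power3_eq_cube algebra_simps)

lemma reaction_mono_second:
  assumes "L \<ge> 0" "0 \<le> p" "0 \<le> q" "q \<le> q'"
  shows "reaction L p q \<le> reaction L p q'"
proof -
  have "q^2 \<le> q'^2" using assms by (intro power_mono) auto
  then have "L * q^2 * p \<le> L * q'^2 * p" using assms by (intro mult_right_mono mult_left_mono) auto
  then show ?thesis unfolding reaction_def by simp
qed

lemma scaled_le_one_imp_le_hundredth:
  fixes L d :: real
  assumes "L > 1" "d > 0" "100*L*d \<le> 1"
  shows "d \<le> 1/100"
proof -
  have "d \<le> L*d" using assms by simp
  moreover have "100*(L*d) \<le> 1" using assms(3) by (simp add: mult.assoc)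
  ultimately show ?thesis by simp
qed

text \<open>The second hypothesis on \<open>d\<close> is where \<open>L > 1\<close> enters: near \<open>(0, 1)\<close> the slope is
  approximately \<open>1 - L\<close>.\<close>
lemma transfer_slope_neg_near_0_1:
  fixes L a b t d :: real
  assumes "L > 1" "d > 0" "100*L*d \<le> 1" "100*L*d \<le> L - 1"
    "0 \<le> a" "a \<le> d" "\<bar>b - 1\<bar> \<le> d" "0 \<le> t" "t \<le> d"
  shows "transfer_slope L a b t < 0"
proof -
  have d1: "d \<le> 1/100" by (rule scaled_le_one_imp_le_hundredth[OF assms(1,2,3)])
  have b: "0 \<le> b" "b \<le> 2" "1 - d \<le> b" using assms d1 by auto
  have "(1-d)^2 \<le> b^2" using b d1 by (intro power_mono) auto
  moreover have "(1-d)^2 = 1 - 2*d + d^2" by (simp add: power2_eq_square algebra_simps)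
  ultimately have "1 - 2*d \<le> b^2" using zero_le_power2[of d] by linarith
  then have "L*(1-2*d) \<le> L*b^2" using assms by (intro mult_left_mono) auto
  then have e1: "L - 2*(L*d) \<le> L*b^2" by (simp add: right_diff_distrib)
  have e2: "a*t \<le> d" using mult_mono[of a d t 1] assms d1 by auto
  have "a*b \<le> d*2" using mult_mono[of a d b 2] assms b by auto
  then have e3: "L*(a*b) \<le> L*(d*2)" using assms by (intro mult_left_mono) auto
  have e4: "L*(a*t) \<le> L*d" using e2 assms by (intro mult_left_mono) auto
  have e5: "0 \<le> L*(b*t)" "0 \<le> L*t^2" "0 \<le> a^2" "0 \<le> t^2" "d \<le> L*d" using assms b by auto
  have "transfer_slope L a b t
      = 1 - 3*a^2 + 3*(a*t) - t^2 + 2*(L*(a*b)) - L*b^2 - 2*(L*(b*t)) + L*(a*t) - L*t^2"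
    unfolding transfer_slope_def by (simp add: algebra_simps)
  also have "\<dots> < 0" using e1 e2 e3 e4 e5 assms by linarith
  finally show ?thesis .
qed

lemma transfer_slope_neg_near_1_0:
  fixes L a b t d :: real
  assumes "L > 1" "d > 0" "100*L*d \<le> 1"
    "\<bar>a - 1\<bar> \<le> 2*d" "0 \<le> b" "b \<le> 2*d" "0 \<le> t" "t \<le> 2*d"
  shows "transfer_slope L a b t < 0"
proof -
  have d1: "d \<le> 1/100" by (rule scaled_le_one_imp_le_hundredth[OF assms(1,2,3)])
  have a: "0 \<le> a" "a \<le> 2" "1 - 2*d \<le> a" using assms d1 by auto
  have "(1-2*d)^2 \<le> a^2" using a d1 by (intro power_mono) auto
  moreover have "(1-2*d)^2 = 1 - 4*d + 4*d^2" by (simp add: power2_eq_square algebra_simps)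
  ultimately have e1: "1 - 4*d \<le> a^2" using zero_le_power2[of d] by linarith
  have e2: "a*t \<le> 2*(2*d)" using mult_mono[of a 2 t "2*d"] assms a by auto
  have "a*b \<le> 2*(2*d)" using mult_mono[of a 2 b "2*d"] assms a by auto
  then have e3: "L*(a*b) \<le> L*(2*(2*d))" using assms by (intro mult_left_mono) auto
  have e4: "L*(a*t) \<le> L*(2*(2*d))" using e2 assms by (intro mult_left_mono) auto
  have e5: "0 \<le> L*(b*t)" "0 \<le> L*t^2" "0 \<le> L*b^2" "0 \<le> t^2" using assms by auto
  have "transfer_slope L a b t
      = 1 - 3*a^2 + 3*(a*t) - t^2 + 2*(L*(a*b)) - L*b^2 - 2*(L*(b*t)) + L*(a*t) - L*t^2"
    unfolding transfer_slope_def by (simp add: algebra_simps)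
  also have "\<dots> < 0" using e1 e2 e3 e4 e5 assms d1 by linarith
  finally show ?thesis .
qed

lemma reaction_less_near_0_1:
  fixes L d a b p q :: real
  assumes "L > 1" "d > 0" "100*L*d \<le> 1" "100*L*d \<le> L - 1"
    "0 < a" "a \<le> d" "\<bar>b - 1\<bar> \<le> d" "0 < p" "0 < q" "p < a" "q \<le> b + (a - p)"
  shows "reaction L p q < reaction L a b"
proof -
  define t where "t = a - p"
  have "reaction L p q \<le> reaction L p (b + t)"
    using assms by (intro reaction_mono_second) (auto simp: t_def)
  also have "\<dots> = reaction L a b + t * transfer_slope L a b t"
    using reaction_transfer[of L a t b] by (simp add: t_def)
  also have "\<dots> < reaction L a b"
    using transfer_slope_neg_near_0_1[of L d a b t] assms by (simp add: t_def mult_pos_neg)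
  finally show ?thesis .
qed

lemma reaction_less_near_1_0:
  fixes L d a b p q :: real
  assumes "L > 1" "d > 0" "100*L*d \<le> 1"
    "\<bar>a - 1\<bar> \<le> d" "0 < b" "b \<le> d" "\<bar>p - 1\<bar> \<le> d" "0 < q" "p < a" "q \<le> b + (a - p)"
  shows "reaction L p q < reaction L a b"
proof -
  define t where "t = a - p"
  have d1: "d \<le> 1/100" by (rule scaled_le_one_imp_le_hundredth[OF assms(1,2,3)])
  have "reaction L p q \<le> reaction L p (b + t)"
    using assms d1 by (intro reaction_mono_second) (auto simp: t_def)
  also have "\<dots> = reaction L a b + t * transfer_slope L a b t"
    using reaction_transfer[of L a t b] by (simp add: t_def)
  also have "\<dots> < reaction L a b"
    using transfer_slope_neg_near_1_0[of L d a b t] assms by (simp add: t_def mult_pos_neg)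
  finally show ?thesis .
qed

lemma reaction_less_step_near_1:
  fixes L d a b h :: real
  assumes "L > 1" "d > 0" "100*L*d \<le> 1" "\<bar>b - 1\<bar> \<le> d" "0 < h" "h \<le> d" "0 < a" "a \<le> h"
  shows "reaction L b a < reaction L (b + h) 0"
proof -
  have d1: "d \<le> 1/100" by (rule scaled_le_one_imp_le_hundredth[OF assms(1,2,3)])
  have "(1-d)^2 \<le> b^2" using assms d1 by (intro power_mono) auto
  moreover have "(1-d)^2 = 1 - 2*d + d^2" by (simp add: power2_eq_square algebra_simps)
  ultimately have b2: "1 - 2*d \<le> b^2" using zero_le_power2[of d] by linarith
  have "0 \<le> b*h" using assms d1 by simp
  then have "2 - 6*d \<le> 3*b^2 + 3*b*h + h^2 - 1" using b2 zero_le_power2[of h] by linarith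
  then have "h*(2 - 6*d) \<le> h*(3*b^2 + 3*b*h + h^2 - 1)" using assms by (intro mult_left_mono) auto
  then have i1: "2*h - 6*(h*d) \<le> h*(3*b^2 + 3*b*h + h^2 - 1)" by (simp add: algebra_simps)
  have "h*d \<le> h*(1/100)" using assms d1 by (intro mult_left_mono) auto
  then have i2: "h*d \<le> h/100" by simp
  have "a^2 \<le> h*d" unfolding power2_eq_square using mult_mono[of a h a d] assms by auto
  moreover have "b \<le> 2" using assms d1 by auto
  ultimately have "a^2*b \<le> (h*d)*2" using assms d1 by (intro mult_mono) auto
  then have "L*(a^2*b) \<le> L*((h*d)*2)" using assms by (intro mult_left_mono) auto
  then have i3: "L*(a^2*b) \<le> 2*h*(L*d)" by (simp add: algebra_simps)
  have "h*(L*d) \<le> h*(1/100)" using assms by (intro mult_left_mono) auto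
  then have i4: "h*(L*d) \<le> h/100" by simp
  have "reaction L (b + h) 0 = reaction L b 0 + h*(3*b^2 + 3*b*h + h^2 - 1)"
    unfolding reaction_def by (simp add: power2_eq_square power3_eq_cube algebra_simps)
  moreover have "reaction L b a = reaction L b 0 + L*(a^2*b)"
    unfolding reaction_def by (simp add: algebra_simps)
  ultimately show ?thesis using i1 i2 i3 i4 assms by linarith
qed

lemma reaction_second_less_near_0_1:
  fixes L d a b p q :: real
  assumes "L > 1" "d > 0" "100*L*d \<le> 1" "100*L*d \<le> L - 1"
    "0 < a" "a \<le> d" "\<bar>b - 1\<bar> \<le> d" "0 < p" "b < q" "q < 1" "a - (q - b) \<le> p"
  shows "reaction L b a < reaction L q p"
proof -
  define h where "h = q - b"
  have h: "0 < h" "h \<le> d" using assms by (auto simp: h_def)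
  have d1: "d \<le> 1/100" by (rule scaled_le_one_imp_le_hundredth[OF assms(1,2,3)])
  show ?thesis
  proof (cases "a \<le> h")
    case True
    then have "reaction L b a < reaction L q 0"
      using reaction_less_step_near_1[of L d b h a] assms h by (simp add: h_def)
    also have "\<dots> \<le> reaction L q p" using assms d1 by (intro reaction_mono_second) auto
    finally show ?thesis .
  next
    case False
    have "reaction L b a = reaction L ((b + h) - h) ((a - h) + h)" by simp
    also have "\<dots> = reaction L (b + h) (a - h) + h * transfer_slope L (b + h) (a - h) h"
      by (rule reaction_transfer)
    also have "\<dots> < reaction L q (a - h)"
      using transfer_slope_neg_near_1_0[of L d "b + h" "a - h" h] assms h False
      by (simp add: h_def mult_pos_neg)
    also have "\<dots> \<le> reaction L q p" using assms False d1 by (intro reaction_mono_second) (auto simp: h_def)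
    finally show ?thesis .
  qed
qed

text \<open>In the comparison argument \<open>(a, b)\<close> and \<open>(p, q)\<close> are the values of the lower and the
  upper pair at a point where the gap \<open>min (p - a) (b - q)\<close> is negative and minimal, in one
  of the two tails.\<close>
lemma reaction_less_at_first_gap:
  fixes L d a b p q :: real
  assumes "L > 1" "d > 0" "100*L*d \<le> 1" "100*L*d \<le> L - 1"
    and "0 < a" "0 < b" "0 < p" "0 < q" "p < a" "p - a \<le> b - q"
    and "(\<bar>a\<bar> \<le> d \<and> \<bar>b - 1\<bar> \<le> d) \<or> (\<bar>a - 1\<bar> \<le> d \<and> \<bar>b\<bar> \<le> d \<and> \<bar>p - 1\<bar> \<le> d)"
  shows "reaction L p q < reaction L a b"
  using assms(11)
proof
  assume "\<bar>a\<bar> \<le> d \<and> \<bar>b - 1\<bar> \<le> d"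
  then show ?thesis using assms(1-10) by (intro reaction_less_near_0_1[of L d]) auto
next
  assume "\<bar>a - 1\<bar> \<le> d \<and> \<bar>b\<bar> \<le> d \<and> \<bar>p - 1\<bar> \<le> d"
  then show ?thesis using assms(1-10) by (intro reaction_less_near_1_0[of L d]) auto
qed

lemma reaction_less_at_second_gap:
  fixes L d a b p q :: real
  assumes "L > 1" "d > 0" "100*L*d \<le> 1" "100*L*d \<le> L - 1"
    and "0 < a" "0 < b" "0 < p" "0 < q" "q < 1" "b < q" "b - q < p - a"
    and "(\<bar>a\<bar> \<le> d \<and> \<bar>b - 1\<bar> \<le> d) \<or> (\<bar>p - 1\<bar> \<le> d \<and> \<bar>q\<bar> \<le> d)"
  shows "reaction L b a < reaction L q p"
  using assms(12)
proof
  assume "\<bar>a\<bar> \<le> d \<and> \<bar>b - 1\<bar> \<le> d"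
  then show ?thesis using assms(1-11) by (intro reaction_second_less_near_0_1[of L d]) auto
next
  assume "\<bar>p - 1\<bar> \<le> d \<and> \<bar>q\<bar> \<le> d"
  then show ?thesis using assms(1-11) by (intro reaction_less_near_0_1[of L d]) auto
qed

lemma continuous_attains_global_max:
  fixes f :: "real \<Rightarrow> real"
  assumes "continuous_on UNIV f" "(f \<longlongrightarrow> l1) at_bot" "(f \<longlongrightarrow> l2) at_top"
    and "l1 < f z1" "l2 < f z1"
  obtains z0 where "\<And>z. f z \<le> f z0"
proof -
  obtain M1 where M1: "\<And>z. z \<le> M1 \<Longrightarrow> f z < f z1"
    using order_tendstoD(2)[OF assms(2,4)] by (auto simp: eventually_at_bot_linorder)
  obtain M2 where M2: "\<And>z. z \<ge> M2 \<Longrightarrow> f z < f z1"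
    using order_tendstoD(2)[OF assms(3,5)] by (auto simp: eventually_at_top_linorder)
  define S where "S = {min M1 z1 .. max M2 z1}"
  have "z1 \<in> S" by (simp add: S_def)
  have "\<exists>x\<in>S. \<forall>y\<in>S. f y \<le> f x"
    using \<open>z1 \<in> S\<close> by (intro continuous_attains_sup)
      (auto simp: S_def intro: continuous_on_subset[OF assms(1)])
  then obtain z0 where z0: "z0 \<in> S" "\<And>y. y \<in> S \<Longrightarrow> f y \<le> f z0" by blast
  have "f z \<le> f z0" for z
  proof (cases "z \<in> S")
    case False
    then have "f z < f z1" using M1 M2 by (force simp: S_def)
    then show ?thesis using z0(2)[OF \<open>z1 \<in> S\<close>] by simp
  qed (use z0 in blast)
  then show thesis by (rule that)
qed

lemma continuous_less_on_interval_uniform: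
  fixes f g :: "real \<Rightarrow> real"
  assumes "continuous_on {A..B} f" "continuous_on {A..B} g" "\<And>t. t \<in> {A..B} \<Longrightarrow> f t < g t"
  obtains \<mu> where "\<mu> > 0" "\<And>t. t \<in> {A..B} \<Longrightarrow> f t + \<mu> \<le> g t"
proof (cases "A \<le> B")
  case True
  have "\<exists>p\<in>{A..B}. \<forall>t\<in>{A..B}. g p - f p \<le> g t - f t"
    using True assms(1,2) by (intro continuous_attains_inf continuous_intros) auto
  then obtain p where "p \<in> {A..B}" "\<And>t. t \<in> {A..B} \<Longrightarrow> g p - f p \<le> g t - f t" by blast
  then show thesis using assms(3) by (intro that[of "g p - f p"]) force+
qed (use that[of 1] in auto)

lemma deriv2_nonneg_at_global_min:
  fixes w w' :: "real \<Rightarrow> real"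
  assumes w: "\<And>z. (w has_real_derivative w' z) (at z)"
    and w': "(w' has_real_derivative D) (at z0)"
    and min: "\<And>z. w z0 \<le> w z"
  shows "D \<ge> 0"
proof (rule ccontr)
  assume "\<not> D \<ge> 0"
  then obtain d where d: "d > 0" "\<And>h. h > 0 \<Longrightarrow> h < d \<Longrightarrow> w' z0 > w' (z0 + h)"
    using DERIV_neg_dec_right[OF w'] by force
  have "w' z0 = 0" using DERIV_local_min[OF w[of z0], of 1] min by auto
  obtain \<xi> where \<xi>: "z0 < \<xi>" "\<xi> < z0 + d/2" "w (z0 + d/2) - w z0 = (z0 + d/2 - z0) * w' \<xi>"
    using MVT2[of z0 "z0 + d/2" w w'] w d by force
  have "w' \<xi> < 0" using d(2)[of "\<xi> - z0"] \<xi> \<open>w' z0 = 0\<close> by simp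
  then have "(z0 + d/2 - z0) * w' \<xi> < 0" using d by (simp add: mult_pos_neg)
  then have "w (z0 + d/2) < w z0" using \<xi>(3) by linarith
  then show False using min[of "z0 + d/2"] by simp
qed

lemma deriv2_nonpos_at_global_max:
  fixes w w' :: "real \<Rightarrow> real"
  assumes "\<And>z. (w has_real_derivative w' z) (at z)" "(w' has_real_derivative D) (at z0)"
    and "\<And>z. w z \<le> w z0"
  shows "D \<le> 0"
  using deriv2_nonneg_at_global_min[of "\<lambda>z. - w z" "\<lambda>z. - w' z" "- D" z0] assms
  by (auto intro: derivative_intros)

lemma gronwall_vanishing_forward:
  fixes e e' :: "real \<Rightarrow> real"
  assumes e: "\<And>z. (e has_real_derivative e' z) (at z)"
    and bound: "\<And>z. \<bar>e' z\<bar> \<le> C * e z" and nonneg: "\<And>z. e z \<ge> 0"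
    and "e z0 = 0" "z0 \<le> z"
  shows "e z = 0"
proof -
  have "((\<lambda>t. e t * exp (- C * t)) has_real_derivative (e' x - C * e x) * exp (- C * x)) (at x)" for x
    by (auto intro!: derivative_eq_intros e simp: algebra_simps)
  moreover have "(e' x - C * e x) * exp (- C * x) \<le> 0" for x
    using bound[of x] by (intro mult_nonpos_nonneg) (auto simp: abs_le_iff)
  ultimately have "e z * exp (- C * z) \<le> e z0 * exp (- C * z0)"
    by (intro DERIV_nonpos_imp_nonincreasing[OF \<open>z0 \<le> z\<close>]) blast
  then have "e z \<le> 0" using \<open>e z0 = 0\<close> by (simp add: mult_le_0_iff)
  then show ?thesis using nonneg[of z] by simp
qed

lemma gronwall_vanishing:
  fixes e e' :: "real \<Rightarrow> real"
  assumes e: "\<And>z. (e has_real_derivative e' z) (at z)"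
    and bound: "\<And>z. \<bar>e' z\<bar> \<le> C * e z" and nonneg: "\<And>z. e z \<ge> 0" and "e z0 = 0"
  shows "e z = 0"
proof (cases "z0 \<le> z")
  case True
  then show ?thesis using gronwall_vanishing_forward[OF e bound nonneg \<open>e z0 = 0\<close>] by blast
next
  case False
  have "((\<lambda>t. e (- t)) has_real_derivative - e' (- t)) (at t)" for t
    using e[of "- t"] by (simp add: DERIV_mirror)
  moreover have "\<bar>- e' (- t)\<bar> \<le> C * e (- t)" "e (- t) \<ge> 0" for t
    using bound nonneg by simp_all
  moreover have "e (- (- z0)) = 0" "- z0 \<le> - z" using \<open>e z0 = 0\<close> False by simp_all
  ultimately have "e (- (- z)) = 0" by (rule gronwall_vanishing_forward)
  then show ?thesis by simp
qed

definition has_system_derivatives ::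
    "real \<Rightarrow> (real \<Rightarrow> real) \<Rightarrow> (real \<Rightarrow> real) \<Rightarrow> (real \<Rightarrow> real) \<Rightarrow> (real \<Rightarrow> real) \<Rightarrow> bool" where
  "has_system_derivatives L v1 v2 d1 d2 \<longleftrightarrow>
     (\<forall>z. (v1 has_real_derivative d1 z) (at z) \<and>
          (d1 has_real_derivative reaction L (v1 z) (v2 z)) (at z) \<and>
          (v2 has_real_derivative d2 z) (at z) \<and>
          (d2 has_real_derivative reaction L (v2 z) (v1 z)) (at z))"

lemma is_system_solution_iff:
  "is_system_solution L v1 v2 \<longleftrightarrow> (\<exists>d1 d2. has_system_derivatives L v1 v2 d1 d2)"
proof
  assume "is_system_solution L v1 v2"
  then obtain d1 dd1 d2 dd2 where H:
    "\<forall>z. (v1 has_real_derivative d1 z) (at z) \<and> (d1 has_real_derivative dd1 z) (at z) \<and>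
         (v2 has_real_derivative d2 z) (at z) \<and> (d2 has_real_derivative dd2 z) (at z) \<and>
         - dd1 z + (v1 z)^3 - v1 z + L * (v2 z)^2 * v1 z = 0 \<and>
         - dd2 z + (v2 z)^3 - v2 z + L * (v1 z)^2 * v2 z = 0"
    unfolding is_system_solution_def by blast
  have "dd1 z = reaction L (v1 z) (v2 z)" "dd2 z = reaction L (v2 z) (v1 z)" for z
    using H[rule_format, of z] unfolding reaction_def by linarith+
  then show "\<exists>d1 d2. has_system_derivatives L v1 v2 d1 d2"
    using H unfolding has_system_derivatives_def by metis
next
  assume "\<exists>d1 d2. has_system_derivatives L v1 v2 d1 d2"
  then obtain d1 d2 where "has_system_derivatives L v1 v2 d1 d2" by blast
  then show "is_system_solution L v1 v2"
    unfolding is_system_solution_def has_system_derivatives_def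
    by (intro exI[of _ d1] exI[of _ "\<lambda>z. reaction L (v1 z) (v2 z)"] exI[of _ d2]
        exI[of _ "\<lambda>z. reaction L (v2 z) (v1 z)"]) (simp add: reaction_def)
qed

lemma has_system_derivatives_swap:
  "has_system_derivatives L v1 v2 d1 d2 \<Longrightarrow> has_system_derivatives L v2 v1 d2 d1"
  unfolding has_system_derivatives_def by blast

lemma has_system_derivatives_shift:
  "has_system_derivatives L v1 v2 d1 d2 \<Longrightarrow>
   has_system_derivatives L (\<lambda>z. v1 (z + c)) (\<lambda>z. v2 (z + c)) (\<lambda>z. d1 (z + c)) (\<lambda>z. d2 (z + c))"
  unfolding has_system_derivatives_def by (simp add: DERIV_shift[symmetric])

lemma has_system_derivatives_continuous_on:
  assumes "has_system_derivatives L v1 v2 d1 d2"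
  shows "continuous_on UNIV v1" "continuous_on UNIV v2"
  using assms unfolding has_system_derivatives_def
  by (meson DERIV_isCont continuous_at_imp_continuous_on)+

definition positive_heteroclinic :: "real \<Rightarrow> (real \<Rightarrow> real) \<Rightarrow> (real \<Rightarrow> real) \<Rightarrow> bool" where
  "positive_heteroclinic L v1 v2 \<longleftrightarrow> is_system_solution L v1 v2 \<and>
     (v1 \<longlongrightarrow> 0) at_bot \<and> (v2 \<longlongrightarrow> 1) at_bot \<and>
     (v1 \<longlongrightarrow> 1) at_top \<and> (v2 \<longlongrightarrow> 0) at_top \<and>
     (\<forall>z. v1 z > 0 \<and> v2 z > 0)"

lemma admissible_imp_positive_heteroclinic:
  "admissible L v1 v2 \<Longrightarrow> positive_heteroclinic L v1 v2"
  unfolding admissible_def positive_heteroclinic_def by blast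

lemma positive_heteroclinic_derivatives:
  assumes "positive_heteroclinic L v1 v2"
  obtains d1 d2 where "has_system_derivatives L v1 v2 d1 d2"
  using assms unfolding positive_heteroclinic_def is_system_solution_iff by blast

lemma filterlim_add_const_at_top_real: "filterlim (\<lambda>z::real. z + c) at_top at_top"
  unfolding filterlim_at_top eventually_at_top_linorder
  by (metis diff_add_cancel add_le_cancel_right)

lemma filterlim_add_const_at_bot_real: "filterlim (\<lambda>z::real. z + c) at_bot at_bot"
  unfolding filterlim_at_bot eventually_at_bot_linorder
  by (metis diff_add_cancel add_le_cancel_right)

lemma positive_heteroclinic_shift:
  assumes "positive_heteroclinic L v1 v2"
  shows "positive_heteroclinic L (\<lambda>z. v1 (z + c)) (\<lambda>z. v2 (z + c))"
  using assms unfolding positive_heteroclinic_def is_system_solution_iff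
  by (auto intro: has_system_derivatives_shift filterlim_compose[OF _ filterlim_add_const_at_top_real]
      filterlim_compose[OF _ filterlim_add_const_at_bot_real])

lemma less_one_of_limits:
  fixes x y dx :: "real \<Rightarrow> real"
  assumes x: "\<And>z. (x has_real_derivative dx z) (at z)"
    and dx: "\<And>z. (dx has_real_derivative reaction L (x z) (y z)) (at z)"
    and pos: "\<And>z. x z > 0" "\<And>z. y z > 0" "L > 0"
    and lim: "(x \<longlongrightarrow> l1) at_bot" "(x \<longlongrightarrow> l2) at_top" "l1 \<le> 1" "l2 \<le> 1"
  shows "x z < 1"
proof (rule ccontr)
  assume "\<not> x z < 1"
  obtain z0 where z0: "\<And>t. x t \<le> x z0" "x z0 \<ge> 1"
  proof (cases "\<exists>t. x t > 1")
    case True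
    then obtain t where "x t > 1" by blast
    moreover have "continuous_on UNIV x"
      using x by (meson DERIV_isCont continuous_at_imp_continuous_on)
    then obtain z0 where "\<And>s. x s \<le> x z0"
      by (rule continuous_attains_global_max[OF _ lim(1,2), of t]) (use lim \<open>x t > 1\<close> in auto)
    ultimately show thesis using that by (meson less_imp_le order_trans)
  next
    case False
    then show thesis using that[of z] \<open>\<not> x z < 1\<close> by (meson not_less order_trans)
  qed
  have "reaction L (x z0) (y z0) \<le> 0" by (rule deriv2_nonpos_at_global_max[OF x dx z0(1)])
  moreover have "0 \<le> x z0 * (x z0 ^ 2 - 1)" using z0(2) by (simp add: one_le_power)
  moreover have "0 < L * (y z0)^2 * x z0" using pos(1)[of z0] pos(2)[of z0] pos(3) by simp
  ultimately show False unfolding reaction_def by (simp add: power3_eq_cube power2_eq_square algebra_simps)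
qed

lemma positive_heteroclinic_bounds:
  assumes "positive_heteroclinic L v1 v2" "L > 0"
  shows "0 < v1 z" "v1 z < 1" "0 < v2 z" "v2 z < 1"
proof -
  obtain d1 d2 where D: "has_system_derivatives L v1 v2 d1 d2"
    using assms(1) by (rule positive_heteroclinic_derivatives)
  have lim: "(v1 \<longlongrightarrow> 0) at_bot" "(v2 \<longlongrightarrow> 1) at_bot" "(v1 \<longlongrightarrow> 1) at_top" "(v2 \<longlongrightarrow> 0) at_top"
    and pos: "\<And>z. v1 z > 0" "\<And>z. v2 z > 0"
    using assms(1) unfolding positive_heteroclinic_def by auto
  show "0 < v1 z" "0 < v2 z" using pos by auto
  show "v1 z < 1"
    using D pos assms(2) by (intro less_one_of_limits[where y = v2, OF _ _ _ _ _ lim(1,3)])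
      (auto simp: has_system_derivatives_def)
  show "v2 z < 1"
    using D pos assms(2) by (intro less_one_of_limits[where y = v1, OF _ _ _ _ _ lim(2,4)])
      (auto simp: has_system_derivatives_def)
qed

lemma positive_heteroclinic_tails:
  assumes "positive_heteroclinic L v1 v2" "e > 0"
  obtains R where "R \<ge> 0"
    "\<And>z. z \<le> -R \<Longrightarrow> \<bar>v1 z\<bar> < e \<and> \<bar>v2 z - 1\<bar> < e"
    "\<And>z. z \<ge> R \<Longrightarrow> \<bar>v1 z - 1\<bar> < e \<and> \<bar>v2 z\<bar> < e"
proof -
  have "eventually (\<lambda>z. dist (v1 z) 0 < e \<and> dist (v2 z) 1 < e) at_bot"
    "eventually (\<lambda>z. dist (v1 z) 1 < e \<and> dist (v2 z) 0 < e) at_top"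
    using assms unfolding positive_heteroclinic_def by (auto simp: tendsto_iff intro: eventually_conj)
  then obtain R1 R2 where R1: "\<And>z. z \<le> R1 \<Longrightarrow> dist (v1 z) 0 < e \<and> dist (v2 z) 1 < e"
    and R2: "\<And>z. z \<ge> R2 \<Longrightarrow> dist (v1 z) 1 < e \<and> dist (v2 z) 0 < e"
    unfolding eventually_at_bot_linorder eventually_at_top_linorder by blast
  show thesis
    by (rule that[of "max 0 (max (-R1) R2)"]) (use R1 R2 in \<open>auto simp: dist_real_def\<close>)
qed

text \<open>The order on pairs of profiles that the competitive system preserves: the first
  component increases and the second decreases.\<close>
definition kamke_le :: "(real \<Rightarrow> real) \<Rightarrow> (real \<Rightarrow> real) \<Rightarrow> (real \<Rightarrow> real) \<Rightarrow> (real \<Rightarrow> real) \<Rightarrow> bool" where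
  "kamke_le u1 u2 y1 y2 \<longleftrightarrow> (\<forall>z. u1 z \<le> y1 z \<and> y2 z \<le> u2 z)"

lemma reaction_le_at_min_gap:
  assumes "has_system_derivatives L u1 u2 du1 du2" "has_system_derivatives L y1 y2 dy1 dy2"
    and "\<And>t. y1 z0 - u1 z0 \<le> y1 t - u1 t"
  shows "reaction L (u1 z0) (u2 z0) \<le> reaction L (y1 z0) (y2 z0)"
proof -
  have "0 \<le> reaction L (y1 z0) (y2 z0) - reaction L (u1 z0) (u2 z0)"
    using assms unfolding has_system_derivatives_def
    by (intro deriv2_nonneg_at_global_min[of "\<lambda>t. y1 t - u1 t" "\<lambda>t. dy1 t - du1 t"])
      (auto intro!: DERIV_diff)
  then show ?thesis by simp
qed

lemma kamke_gap_attains_negative_min: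
  assumes U: "positive_heteroclinic L u1 u2" and Y: "positive_heteroclinic L y1 y2"
    and "\<not> kamke_le u1 u2 y1 y2"
  obtains z0 where "min (y1 z0 - u1 z0) (u2 z0 - y2 z0) < 0"
    "\<And>t. min (y1 z0 - u1 z0) (u2 z0 - y2 z0) \<le> min (y1 t - u1 t) (u2 t - y2 t)"
proof -
  define m where "m z = min (y1 z - u1 z) (u2 z - y2 z)" for z
  obtain z where "m z < 0"
    using assms(3) unfolding kamke_le_def m_def by (auto simp: min_less_iff_disj not_le)
  obtain du1 du2 dy1 dy2 where "has_system_derivatives L u1 u2 du1 du2"
    and "has_system_derivatives L y1 y2 dy1 dy2"
    using U Y by (meson positive_heteroclinic_derivatives)
  then have "continuous_on UNIV (\<lambda>z. - m z)" unfolding m_def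
    using has_system_derivatives_continuous_on by (intro continuous_intros) auto
  moreover have "((\<lambda>z. - m z) \<longlongrightarrow> - min (0 - 0) (1 - 1)) at_bot"
    and "((\<lambda>z. - m z) \<longlongrightarrow> - min (1 - 1) (0 - 0)) at_top"
    using U Y unfolding m_def positive_heteroclinic_def by (intro tendsto_intros; simp)+
  ultimately obtain z0 where "\<And>t. - m t \<le> - m z0"
    by (rule continuous_attains_global_max[of _ _ _ z]) (use \<open>m z < 0\<close> in auto)
  then have min: "\<And>t. m z0 \<le> m t" by simp
  then have "m z0 < 0" using \<open>m z < 0\<close> le_less_trans by blast
  then show thesis using min unfolding m_def by (rule that)
qed

text \<open>A negative minimum of the gap lies in a tail, where the reaction inequalities above
  contradict the second-order condition at a minimum.\<close>
lemma kamke_le_of_tails: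
  fixes L d A B :: real
  assumes L: "L > 1" and d: "d > 0" "100*L*d \<le> 1" "100*L*d \<le> L - 1"
    and U: "positive_heteroclinic L u1 u2" and Y: "positive_heteroclinic L y1 y2"
    and mid: "\<And>z. A \<le> z \<Longrightarrow> z \<le> B \<Longrightarrow> u1 z < y1 z \<and> y2 z < u2 z"
    and left: "\<And>z. z < A \<Longrightarrow> \<bar>u1 z\<bar> \<le> d \<and> \<bar>u2 z - 1\<bar> \<le> d"
    and right: "\<And>z. z > B \<Longrightarrow> \<bar>u1 z - 1\<bar> \<le> d \<and> \<bar>u2 z\<bar> \<le> d \<and> \<bar>y1 z - 1\<bar> \<le> d \<and> \<bar>y2 z\<bar> \<le> d"
  shows "kamke_le u1 u2 y1 y2"
proof (rule ccontr)
  define m where "m z = min (y1 z - u1 z) (u2 z - y2 z)" for z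
  assume "\<not> kamke_le u1 u2 y1 y2"
  then obtain z0 where "m z0 < 0" and z0: "\<And>t. m z0 \<le> m t"
    unfolding m_def using kamke_gap_attains_negative_min[OF U Y] by blast
  have L0: "L > 0" using L by simp
  obtain du1 du2 dy1 dy2 where DU: "has_system_derivatives L u1 u2 du1 du2"
    and DY: "has_system_derivatives L y1 y2 dy1 dy2"
    using U Y by (meson positive_heteroclinic_derivatives)
  note bU = positive_heteroclinic_bounds[OF U L0] and bY = positive_heteroclinic_bounds[OF Y L0]
  have tail: "(\<bar>u1 z0\<bar> \<le> d \<and> \<bar>u2 z0 - 1\<bar> \<le> d) \<or>
      (\<bar>u1 z0 - 1\<bar> \<le> d \<and> \<bar>u2 z0\<bar> \<le> d \<and> \<bar>y1 z0 - 1\<bar> \<le> d \<and> \<bar>y2 z0\<bar> \<le> d)"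
    using \<open>m z0 < 0\<close> mid[of z0] left[of z0] right[of z0] unfolding m_def by force
  show False
  proof (cases "y1 z0 - u1 z0 \<le> u2 z0 - y2 z0")
    case True
    then have "m z0 = y1 z0 - u1 z0" unfolding m_def by simp
    then have "\<And>t. y1 z0 - u1 z0 \<le> y1 t - u1 t" using z0 unfolding m_def by (metis min.boundedE)
    then have "reaction L (u1 z0) (u2 z0) \<le> reaction L (y1 z0) (y2 z0)"
      by (rule reaction_le_at_min_gap[OF DU DY])
    moreover have "reaction L (y1 z0) (y2 z0) < reaction L (u1 z0) (u2 z0)"
      using tail bU[of z0] bY[of z0] \<open>m z0 < 0\<close> \<open>m z0 = y1 z0 - u1 z0\<close> True
      by (intro reaction_less_at_first_gap[OF L d]) auto
    ultimately show False by simp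
  next
    case False
    then have "m z0 = u2 z0 - y2 z0" unfolding m_def by simp
    then have "\<And>t. u2 z0 - y2 z0 \<le> u2 t - y2 t" using z0 unfolding m_def by (metis min.boundedE)
    then have "reaction L (y2 z0) (y1 z0) \<le> reaction L (u2 z0) (u1 z0)"
      by (rule reaction_le_at_min_gap[OF has_system_derivatives_swap[OF DY]
            has_system_derivatives_swap[OF DU]])
    moreover have "reaction L (u2 z0) (u1 z0) < reaction L (y2 z0) (y1 z0)"
      using tail bU[of z0] bY[of z0] \<open>m z0 < 0\<close> \<open>m z0 = u2 z0 - y2 z0\<close> False
      by (intro reaction_less_at_second_gap[OF L d]) auto
    ultimately show False by simp
  qed
qed

lemma reaction_lipschitz:
  fixes L p q a b :: real
  assumes "L \<ge> 0" "0 \<le> p" "p \<le> 1" "0 \<le> q" "q \<le> 1" "0 \<le> a" "a \<le> 1" "0 \<le> b" "b \<le> 1"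
  shows "\<bar>reaction L p q - reaction L a b\<bar> \<le> (4 + 2*L) * (\<bar>p - a\<bar> + \<bar>q - b\<bar>)"
proof -
  have id: "reaction L p q - reaction L a b = (p-a)*(p^2+p*a+a^2 - 1 + L*q^2) + (L*a*(q+b))*(q-b)"
    unfolding reaction_def by (simp add: power2_eq_square power3_eq_cube algebra_simps)
  have h1: "p^2 \<le> 1" "p*a \<le> 1" "a^2 \<le> 1" "q^2 \<le> 1"
    using assms by (auto simp: power2_eq_square mult_le_one)
  have h2: "0 \<le> p^2" "0 \<le> p*a" "0 \<le> a^2" "0 \<le> q^2" using assms by auto
  have h3: "L*q^2 \<le> L" "0 \<le> L*q^2" using h1(4) assms by (auto simp: mult_left_le)
  have c1: "\<bar>p^2+p*a+a^2 - 1 + L*q^2\<bar> \<le> 4 + 2*L" unfolding abs_le_iff using h1 h2 h3 assms(1) by linarith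
  have "a*(q+b) \<le> 1*2" using assms by (intro mult_mono) auto
  then have "L*(a*(q+b)) \<le> L*2" using assms by (intro mult_left_mono) auto
  moreover have "0 \<le> L*(a*(q+b))" using assms by auto
  ultimately have c2: "\<bar>L*a*(q+b)\<bar> \<le> 4 + 2*L" by (simp add: mult.assoc)
  have "\<bar>reaction L p q - reaction L a b\<bar> \<le> \<bar>(p-a)*(p^2+p*a+a^2 - 1 + L*q^2)\<bar> + \<bar>(L*a*(q+b))*(q-b)\<bar>"
    unfolding id by (rule abs_triangle_ineq)
  also have "\<dots> = \<bar>p-a\<bar>*\<bar>p^2+p*a+a^2 - 1 + L*q^2\<bar> + \<bar>L*a*(q+b)\<bar>*\<bar>q-b\<bar>" by (simp add: abs_mult)
  also have "\<dots> \<le> \<bar>p-a\<bar>*(4 + 2*L) + (4+2*L)*\<bar>q-b\<bar>"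
    using c1 c2 by (intro add_mono mult_left_mono mult_right_mono) auto
  finally show ?thesis by (simp add: algebra_simps)
qed

lemma energy_derivative_bound:
  fixes a a' b b' P Q K :: real
  assumes "K \<ge> 0" "\<bar>P\<bar> \<le> K*(\<bar>a\<bar>+\<bar>b\<bar>)" "\<bar>Q\<bar> \<le> K*(\<bar>a\<bar>+\<bar>b\<bar>)"
  shows "\<bar>2*a*a' + 2*a'*P + 2*b*b' + 2*b'*Q\<bar> \<le> (1+2*K)*(a^2+a'^2+b^2+b'^2)"
proof -
  have ab: "2*(\<bar>x\<bar>*\<bar>y\<bar>) \<le> x^2 + y^2" for x y :: real
    using sum_squares_bound[of "\<bar>x\<bar>" "\<bar>y\<bar>"] by (simp add: mult.assoc)
  have "\<bar>2*a*a' + 2*a'*P + 2*b*b' + 2*b'*Q\<bar> \<le> \<bar>2*a*a'\<bar> + \<bar>2*a'*P\<bar> + \<bar>2*b*b'\<bar> + \<bar>2*b'*Q\<bar>"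
    using abs_triangle_ineq[of "2*a*a' + 2*a'*P + 2*b*b'" "2*b'*Q"]
      abs_triangle_ineq[of "2*a*a' + 2*a'*P" "2*b*b'"] abs_triangle_ineq[of "2*a*a'" "2*a'*P"]
    by linarith
  also have "\<dots> = 2*(\<bar>a\<bar>*\<bar>a'\<bar>) + 2*(\<bar>b\<bar>*\<bar>b'\<bar>) + 2*(\<bar>a'\<bar>*\<bar>P\<bar>) + 2*(\<bar>b'\<bar>*\<bar>Q\<bar>)"
    by (simp add: abs_mult)
  also have "\<dots> \<le> 2*(\<bar>a\<bar>*\<bar>a'\<bar>) + 2*(\<bar>b\<bar>*\<bar>b'\<bar>)
      + K*(2*(\<bar>a'\<bar>*\<bar>a\<bar>) + 2*(\<bar>a'\<bar>*\<bar>b\<bar>) + 2*(\<bar>b'\<bar>*\<bar>a\<bar>) + 2*(\<bar>b'\<bar>*\<bar>b\<bar>))"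
    using mult_left_mono[OF assms(2), of "\<bar>a'\<bar>"] mult_left_mono[OF assms(3), of "\<bar>b'\<bar>"]
    by (simp add: algebra_simps)
  also have "\<dots> \<le> (a^2+a'^2+b^2+b'^2) + K*(2*(a^2+a'^2+b^2+b'^2))"
  proof (rule add_mono)
    show "2*(\<bar>a\<bar>*\<bar>a'\<bar>) + 2*(\<bar>b\<bar>*\<bar>b'\<bar>) \<le> a^2+a'^2+b^2+b'^2"
      using ab[of a a'] ab[of b b'] by linarith
    show "K*(2*(\<bar>a'\<bar>*\<bar>a\<bar>) + 2*(\<bar>a'\<bar>*\<bar>b\<bar>) + 2*(\<bar>b'\<bar>*\<bar>a\<bar>) + 2*(\<bar>b'\<bar>*\<bar>b\<bar>))
        \<le> K*(2*(a^2+a'^2+b^2+b'^2))"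
      using ab[of a' a] ab[of a' b] ab[of b' a] ab[of b' b] assms(1) by (intro mult_left_mono) auto
  qed
  finally show ?thesis by (simp add: algebra_simps)
qed

lemma system_solution_unique:
  assumes L: "L \<ge> 0"
    and DU: "has_system_derivatives L u1 u2 du1 du2" and DY: "has_system_derivatives L y1 y2 dy1 dy2"
    and bounds: "\<And>z. u1 z \<in> {0..1} \<and> u2 z \<in> {0..1} \<and> y1 z \<in> {0..1} \<and> y2 z \<in> {0..1}"
    and init: "u1 z0 = y1 z0" "u2 z0 = y2 z0" "du1 z0 = dy1 z0" "du2 z0 = dy2 z0"
  shows "u1 z = y1 z \<and> u2 z = y2 z"
proof -
  define K where "K = 4 + 2*L"
  define P where "P t = reaction L (y1 t) (y2 t) - reaction L (u1 t) (u2 t)" for t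
  define Q where "Q t = reaction L (y2 t) (y1 t) - reaction L (u2 t) (u1 t)" for t
  define e where "e t = (y1 t - u1 t)^2 + (dy1 t - du1 t)^2 + (y2 t - u2 t)^2 + (dy2 t - du2 t)^2" for t
  define e' where "e' t = 2*(y1 t - u1 t)*(dy1 t - du1 t) + 2*(dy1 t - du1 t)*P t
     + 2*(y2 t - u2 t)*(dy2 t - du2 t) + 2*(dy2 t - du2 t)*Q t" for t
  have "(e has_real_derivative e' t) (at t)" for t
    using DU DY unfolding e_def e'_def P_def Q_def has_system_derivatives_def
    by (auto intro!: derivative_eq_intros simp: algebra_simps power2_eq_square)
  moreover have "\<bar>e' t\<bar> \<le> (1 + 2*K) * e t" for t
  proof -
    have "\<bar>P t\<bar> \<le> K * (\<bar>y1 t - u1 t\<bar> + \<bar>y2 t - u2 t\<bar>)"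
      unfolding P_def K_def using bounds[of t] L by (intro reaction_lipschitz) auto
    moreover have "\<bar>Q t\<bar> \<le> K * (\<bar>y1 t - u1 t\<bar> + \<bar>y2 t - u2 t\<bar>)"
      using reaction_lipschitz[of L "y2 t" "y1 t" "u2 t" "u1 t"] bounds[of t] L
      unfolding Q_def K_def by (simp add: add.commute)
    ultimately show ?thesis unfolding e'_def e_def using L
      by (intro energy_derivative_bound) (auto simp: K_def)
  qed
  ultimately have "e z = 0"
    by (rule gronwall_vanishing[of _ _ _ z0]) (auto simp: e_def init)
  then have "(y1 z - u1 z)^2 = 0 \<and> (y2 z - u2 z)^2 = 0"
    unfolding e_def by (smt (verit) zero_le_power2)
  then show ?thesis by simp
qed

lemma kamke_le_touching_values:
  assumes L: "L > 0" and U: "positive_heteroclinic L u1 u2" and Y: "positive_heteroclinic L y1 y2"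
    and le: "kamke_le u1 u2 y1 y2" and touch: "u1 z0 = y1 z0 \<or> u2 z0 = y2 z0"
  shows "u1 z0 = y1 z0 \<and> u2 z0 = y2 z0"
proof -
  obtain du1 du2 dy1 dy2 where DU: "has_system_derivatives L u1 u2 du1 du2"
    and DY: "has_system_derivatives L y1 y2 dy1 dy2"
    using U Y by (meson positive_heteroclinic_derivatives)
  note bU = positive_heteroclinic_bounds[OF U L] and bY = positive_heteroclinic_bounds[OF Y L]
  show ?thesis
  proof (cases "u1 z0 = y1 z0")
    case True
    then have "\<And>t. y1 z0 - u1 z0 \<le> y1 t - u1 t" using le unfolding kamke_le_def by force
    then have "reaction L (u1 z0) (u2 z0) \<le> reaction L (y1 z0) (y2 z0)"
      by (rule reaction_le_at_min_gap[OF DU DY])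
    then have "u1 z0 * (u2 z0 ^ 2 - y2 z0 ^ 2) \<le> 0"
      using True L unfolding reaction_def by (simp add: algebra_simps)
    then have "u2 z0 \<le> y2 z0"
      using bU(1)[of z0] bU(3)[of z0] bY(3)[of z0] by (simp add: mult_le_0_iff power_mono_iff)
    then show ?thesis using True le unfolding kamke_le_def by (metis order_antisym)
  next
    case False
    then have "u2 z0 = y2 z0" using touch by simp
    then have "\<And>t. u2 z0 - y2 z0 \<le> u2 t - y2 t" using le unfolding kamke_le_def by force
    then have "reaction L (y2 z0) (y1 z0) \<le> reaction L (u2 z0) (u1 z0)"
      by (rule reaction_le_at_min_gap[OF has_system_derivatives_swap[OF DY]
            has_system_derivatives_swap[OF DU]])
    then have "u2 z0 * (y1 z0 ^ 2 - u1 z0 ^ 2) \<le> 0"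
      using \<open>u2 z0 = y2 z0\<close> L unfolding reaction_def by (simp add: algebra_simps)
    then have "y1 z0 \<le> u1 z0"
      using bU(1)[of z0] bU(3)[of z0] bY(1)[of z0] by (simp add: mult_le_0_iff power_mono_iff)
    then show ?thesis using \<open>u2 z0 = y2 z0\<close> le unfolding kamke_le_def by (metis order_antisym)
  qed
qed

text \<open>The gaps are nonnegative and vanish at the touching point, so their derivatives vanish
  there too; \<open>u\<close> and \<open>y\<close> then solve the same initial value problem.\<close>
lemma kamke_le_touching_eq:
  assumes L: "L > 0" and U: "positive_heteroclinic L u1 u2" and Y: "positive_heteroclinic L y1 y2"
    and le: "kamke_le u1 u2 y1 y2" and touch: "u1 z0 = y1 z0 \<or> u2 z0 = y2 z0"
  shows "u1 z = y1 z \<and> u2 z = y2 z"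
proof -
  obtain du1 du2 dy1 dy2 where DU: "has_system_derivatives L u1 u2 du1 du2"
    and DY: "has_system_derivatives L y1 y2 dy1 dy2"
    using U Y by (meson positive_heteroclinic_derivatives)
  note agree = kamke_le_touching_values[OF assms]
  have gap1: "((\<lambda>t. y1 t - u1 t) has_real_derivative dy1 z0 - du1 z0) (at z0)"
    and gap2: "((\<lambda>t. u2 t - y2 t) has_real_derivative du2 z0 - dy2 z0) (at z0)"
    using DU DY unfolding has_system_derivatives_def by (auto intro!: DERIV_diff)
  have "dy1 z0 - du1 z0 = 0"
    by (rule DERIV_local_min[OF gap1 zero_less_one]) (use le agree in \<open>auto simp: kamke_le_def\<close>)
  moreover have "du2 z0 - dy2 z0 = 0"
    by (rule DERIV_local_min[OF gap2 zero_less_one]) (use le agree in \<open>auto simp: kamke_le_def\<close>)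
  ultimately show ?thesis
    using agree positive_heteroclinic_bounds[OF U L] positive_heteroclinic_bounds[OF Y L] L
    by (intro system_solution_unique[OF _ DU DY, of z0]) (auto simp: less_imp_le)
qed

definition tail_width :: "real \<Rightarrow> real" where
  "tail_width L = min 1 (L - 1) / (100 * L)"

lemma tail_width:
  assumes "L > 1"
  shows "tail_width L > 0" "100 * L * tail_width L \<le> 1" "100 * L * tail_width L \<le> L - 1"
proof -
  have "100 * L * tail_width L = min 1 (L - 1)" using assms by (simp add: tail_width_def)
  then show "100 * L * tail_width L \<le> 1" "100 * L * tail_width L \<le> L - 1" by auto
  show "tail_width L > 0" using assms by (simp add: tail_width_def)
qed

text \<open>Beyond \<open>R\<close> both profiles are within \<open>tail_width L\<close> of the equilibria, so the
  comparison lemma reduces the order of \<open>u\<close> and a shift of \<open>v\<close> to a strict order on an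
  interval \<open>[-R, B]\<close>.\<close>
lemma kamke_le_shift_of_middle:
  assumes L: "L > 1" and U: "positive_heteroclinic L u1 u2" and V: "positive_heteroclinic L v1 v2"
  obtains R where "R \<ge> 0"
    "\<And>\<sigma> B. (\<And>t. - R \<le> t \<Longrightarrow> t \<le> B \<Longrightarrow> u1 t < v1 (t + \<sigma>) \<and> v2 (t + \<sigma>) < u2 t) \<Longrightarrow>
       (\<And>t. t > B \<Longrightarrow> t \<ge> R \<and> t + \<sigma> \<ge> R) \<Longrightarrow>
       kamke_le u1 u2 (\<lambda>z. v1 (z + \<sigma>)) (\<lambda>z. v2 (z + \<sigma>))"
proof -
  define d where "d = tail_width L"
  have d: "d > 0" "100*L*d \<le> 1" "100*L*d \<le> L - 1" using tail_width[OF L] by (simp_all add: d_def)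
  obtain RU where RU: "\<And>z. z \<le> -RU \<Longrightarrow> \<bar>u1 z\<bar> < d \<and> \<bar>u2 z - 1\<bar> < d"
    "\<And>z. z \<ge> RU \<Longrightarrow> \<bar>u1 z - 1\<bar> < d \<and> \<bar>u2 z\<bar> < d"
    using positive_heteroclinic_tails[OF U d(1)] by metis
  obtain RV where RV: "RV \<ge> 0" "\<And>z. z \<ge> RV \<Longrightarrow> \<bar>v1 z - 1\<bar> < d \<and> \<bar>v2 z\<bar> < d"
    using positive_heteroclinic_tails[OF V d(1)] by metis
  show thesis
  proof (rule that[of "max RU RV"])
    fix \<sigma> B
    assume mid: "\<And>t. - max RU RV \<le> t \<Longrightarrow> t \<le> B \<Longrightarrow> u1 t < v1 (t + \<sigma>) \<and> v2 (t + \<sigma>) < u2 t"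
      and right: "\<And>t. t > B \<Longrightarrow> t \<ge> max RU RV \<and> t + \<sigma> \<ge> max RU RV"
    show "kamke_le u1 u2 (\<lambda>z. v1 (z + \<sigma>)) (\<lambda>z. v2 (z + \<sigma>))"
    proof (rule kamke_le_of_tails[OF L d U positive_heteroclinic_shift[OF V], of "- max RU RV" B])
      fix t assume "t < - max RU RV"
      then have "t \<le> - RU" by simp
      then show "\<bar>u1 t\<bar> \<le> d \<and> \<bar>u2 t - 1\<bar> \<le> d" using RU(1)[of t] by simp
    next
      fix t assume "t > B"
      then have "t \<ge> RU" "t + \<sigma> \<ge> RV" using right[of t] by simp_all
      then show "\<bar>u1 t - 1\<bar> \<le> d \<and> \<bar>u2 t\<bar> \<le> d \<and> \<bar>v1 (t + \<sigma>) - 1\<bar> \<le> d \<and> \<bar>v2 (t + \<sigma>)\<bar> \<le> d"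
        using RU(2)[of t] RV(2)[of "t + \<sigma>"] by simp
    qed (rule mid)
  qed (use RV(1) in simp)
qed

lemma kamke_le_large_shifts:
  assumes L: "L > 1" and U: "positive_heteroclinic L u1 u2" and V: "positive_heteroclinic L v1 v2"
  obtains \<tau>0 where "\<And>\<sigma>. \<sigma> \<ge> \<tau>0 \<Longrightarrow> kamke_le u1 u2 (\<lambda>z. v1 (z + \<sigma>)) (\<lambda>z. v2 (z + \<sigma>))"
proof -
  obtain R where R: "R \<ge> 0"
    "\<And>\<sigma> B. (\<And>t. - R \<le> t \<Longrightarrow> t \<le> B \<Longrightarrow> u1 t < v1 (t + \<sigma>) \<and> v2 (t + \<sigma>) < u2 t) \<Longrightarrow>
       (\<And>t. t > B \<Longrightarrow> t \<ge> R \<and> t + \<sigma> \<ge> R) \<Longrightarrow>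
       kamke_le u1 u2 (\<lambda>z. v1 (z + \<sigma>)) (\<lambda>z. v2 (z + \<sigma>))"
    using kamke_le_shift_of_middle[OF L U V] by blast
  obtain du1 du2 where "has_system_derivatives L u1 u2 du1 du2"
    using U by (rule positive_heteroclinic_derivatives)
  note cu = has_system_derivatives_continuous_on[OF this]
  have "u1 t < 1" "0 < u2 t" for t using positive_heteroclinic_bounds[OF U] L by auto
  then obtain \<mu>1 \<mu>2 where \<mu>1: "\<mu>1 > 0" "\<And>t. t \<in> {-R..R} \<Longrightarrow> u1 t + \<mu>1 \<le> 1"
    and \<mu>2: "\<mu>2 > 0" "\<And>t. t \<in> {-R..R} \<Longrightarrow> 0 + \<mu>2 \<le> u2 t"
    using continuous_less_on_interval_uniform[OF continuous_on_subset[OF cu(1)] continuous_on_const]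
      continuous_less_on_interval_uniform[OF continuous_on_const continuous_on_subset[OF cu(2)]]
    by (metis subset_UNIV)
  have "min \<mu>1 \<mu>2 > 0" using \<mu>1(1) \<mu>2(1) by simp
  then obtain RV where RV: "RV \<ge> 0" "\<And>z. z \<ge> RV \<Longrightarrow> \<bar>v1 z - 1\<bar> < min \<mu>1 \<mu>2 \<and> \<bar>v2 z\<bar> < min \<mu>1 \<mu>2"
    using positive_heteroclinic_tails[OF V] by metis
  show thesis
  proof (rule that)
    fix \<sigma> assume \<sigma>: "\<sigma> \<ge> R + RV"
    show "kamke_le u1 u2 (\<lambda>z. v1 (z + \<sigma>)) (\<lambda>z. v2 (z + \<sigma>))"
    proof (rule R(2))
      fix t assume t: "- R \<le> t" "t \<le> R"
      then have "\<bar>v1 (t + \<sigma>) - 1\<bar> < min \<mu>1 \<mu>2 \<and> \<bar>v2 (t + \<sigma>)\<bar> < min \<mu>1 \<mu>2"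
        using RV(2) \<sigma> by simp
      then show "u1 t < v1 (t + \<sigma>) \<and> v2 (t + \<sigma>) < u2 t" using \<mu>1(2)[of t] \<mu>2(2)[of t] t by auto
    next
      fix t assume "t > R"
      then show "t \<ge> R \<and> t + \<sigma> \<ge> R" using \<sigma> R(1) RV(1) by simp
    qed
  qed
qed

lemma not_kamke_le_some_shift:
  assumes "u1 0 > 0" "(v1 \<longlongrightarrow> 0) at_bot"
  obtains \<sigma> where "\<not> kamke_le u1 u2 (\<lambda>z. v1 (z + \<sigma>)) (\<lambda>z. v2 (z + \<sigma>))"
proof -
  obtain \<sigma> where "v1 \<sigma> < u1 0"
    using order_tendstoD(2)[OF assms(2,1)]
    by (meson eventually_happens' trivial_limit_at_bot_linorder)
  then show thesis by (intro that[of \<sigma>]) (auto simp: kamke_le_def not_le intro: exI[of _ 0])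
qed

lemma kamke_le_shift_right_closed:
  assumes "continuous_on UNIV v1" "continuous_on UNIV v2"
    and "\<And>\<sigma>. \<sigma> > \<tau> \<Longrightarrow> kamke_le u1 u2 (\<lambda>z. v1 (z + \<sigma>)) (\<lambda>z. v2 (z + \<sigma>))"
  shows "kamke_le u1 u2 (\<lambda>z. v1 (z + \<tau>)) (\<lambda>z. v2 (z + \<tau>))"
  unfolding kamke_le_def
proof
  fix z
  have "isCont v1 (z + \<tau>)" "isCont v2 (z + \<tau>)"
    using assms(1,2) by (simp_all add: continuous_on_eq_continuous_at)
  have lim1: "((\<lambda>\<sigma>. v1 (z + \<sigma>)) \<longlongrightarrow> v1 (z + \<tau>)) (at_right \<tau>)"
    by (rule tendsto_within_subset[OF _ subset_UNIV])
      (intro isCont_tendsto_compose[OF \<open>isCont v1 (z + \<tau>)\<close>] tendsto_intros)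
  have lim2: "((\<lambda>\<sigma>. v2 (z + \<sigma>)) \<longlongrightarrow> v2 (z + \<tau>)) (at_right \<tau>)"
    by (rule tendsto_within_subset[OF _ subset_UNIV])
      (intro isCont_tendsto_compose[OF \<open>isCont v2 (z + \<tau>)\<close>] tendsto_intros)
  have ev: "eventually (\<lambda>\<sigma>. kamke_le u1 u2 (\<lambda>z. v1 (z + \<sigma>)) (\<lambda>z. v2 (z + \<sigma>))) (at_right \<tau>)"
    using eventually_at_right_less[of \<tau>] by (rule eventually_mono) (rule assms(3))
  have "u1 z \<le> v1 (z + \<tau>)"
    by (rule tendsto_lowerbound[OF lim1]) (use ev in \<open>auto elim!: eventually_mono simp: kamke_le_def\<close>)
  moreover have "v2 (z + \<tau>) \<le> u2 z"
    by (rule tendsto_upperbound[OF lim2]) (use ev in \<open>auto elim!: eventually_mono simp: kamke_le_def\<close>)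
  ultimately show "u1 z \<le> v1 (z + \<tau>) \<and> v2 (z + \<tau>) \<le> u2 z" ..
qed

lemma least_upward_threshold:
  fixes P :: "real \<Rightarrow> bool"
  assumes above: "\<And>\<sigma>. \<sigma> \<ge> a \<Longrightarrow> P \<sigma>" and "\<not> P b"
    and right_closed: "\<And>\<tau>. (\<And>\<sigma>. \<sigma> > \<tau> \<Longrightarrow> P \<sigma>) \<Longrightarrow> P \<tau>"
  obtains \<tau> where "\<And>\<sigma>. \<sigma> \<ge> \<tau> \<Longrightarrow> P \<sigma>" "\<And>\<tau>'. \<tau>' < \<tau> \<Longrightarrow> \<exists>\<sigma>\<ge>\<tau>'. \<not> P \<sigma>"
proof -
  define S where "S = {\<tau>. \<forall>\<sigma>\<ge>\<tau>. P \<sigma>}"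
  have "S \<noteq> {}" using above by (auto simp: S_def)
  have "bdd_below S"
    using \<open>\<not> P b\<close> by (intro bdd_belowI[of _ b]) (auto simp: S_def intro: ccontr)
  have "P \<sigma>" if "\<sigma> > Inf S" for \<sigma>
  proof -
    obtain s where "s \<in> S" "s < \<sigma>"
      using \<open>\<sigma> > Inf S\<close> cInf_less_iff[OF \<open>S \<noteq> {}\<close> \<open>bdd_below S\<close>] by blast
    then show ?thesis by (auto simp: S_def)
  qed
  then have "P \<sigma>" if "\<sigma> \<ge> Inf S" for \<sigma>
    using that right_closed by (cases "\<sigma> = Inf S") auto
  moreover have "\<exists>\<sigma>\<ge>\<tau>'. \<not> P \<sigma>" if "\<tau>' < Inf S" for \<tau>'
    using that cInf_lower[OF _ \<open>bdd_below S\<close>, of \<tau>'] by (force simp: S_def)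
  ultimately show thesis by (rule that)
qed

lemma uniformly_close_shifts:
  fixes v :: "real \<Rightarrow> real"
  assumes "continuous_on UNIV v" "\<mu> > 0"
  obtains \<eta> where "\<eta> > 0" "\<And>t \<sigma>. t \<in> {A..B} \<Longrightarrow> \<bar>\<sigma> - \<tau>\<bar> \<le> \<eta> \<Longrightarrow> \<bar>v (t + \<sigma>) - v (t + \<tau>)\<bar> < \<mu>"
proof -
  define T where "T = {A + \<tau> - 1 .. B + \<tau> + 1}"
  have "uniformly_continuous_on T v"
    unfolding T_def by (intro compact_uniformly_continuous continuous_on_subset[OF assms(1)]) auto
  then obtain \<eta>' where \<eta>': "\<eta>' > 0" "\<And>x x'. x \<in> T \<Longrightarrow> x' \<in> T \<Longrightarrow> dist x' x < \<eta>' \<Longrightarrow> dist (v x') (v x) < \<mu>"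
    unfolding uniformly_continuous_on_def using assms(2) by metis
  show thesis
  proof (rule that[of "min 1 \<eta>' / 2"])
    fix t \<sigma> assume "t \<in> {A..B}" "\<bar>\<sigma> - \<tau>\<bar> \<le> min 1 \<eta>' / 2"
    moreover have "min 1 \<eta>' / 2 < \<eta>'" "min 1 \<eta>' / 2 \<le> 1" using \<eta>'(1) by auto
    ultimately have "\<bar>\<sigma> - \<tau>\<bar> < \<eta>'" "\<bar>\<sigma> - \<tau>\<bar> \<le> 1" "A \<le> t" "t \<le> B"
      using \<eta>'(1) by auto
    then have "t + \<tau> \<in> T" "t + \<sigma> \<in> T" "dist (t + \<sigma>) (t + \<tau>) < \<eta>'"
      by (auto simp: T_def dist_real_def abs_le_iff)
    then show "\<bar>v (t + \<sigma>) - v (t + \<tau>)\<bar> < \<mu>" using \<eta>'(2) by (simp add: dist_real_def)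
  qed (use \<eta>' in simp)
qed

lemma kamke_le_strict_shift_perturb:
  assumes L: "L > 1" and U: "positive_heteroclinic L u1 u2" and V: "positive_heteroclinic L v1 v2"
    and strict: "\<And>z. u1 z < v1 (z + \<tau>) \<and> v2 (z + \<tau>) < u2 z"
  obtains \<eta> where "\<eta> > 0"
    "\<And>\<sigma>. \<tau> - \<eta> \<le> \<sigma> \<Longrightarrow> \<sigma> \<le> \<tau> \<Longrightarrow> kamke_le u1 u2 (\<lambda>z. v1 (z + \<sigma>)) (\<lambda>z. v2 (z + \<sigma>))"
proof -
  obtain R where R: "R \<ge> 0"
    "\<And>\<sigma> B. (\<And>t. - R \<le> t \<Longrightarrow> t \<le> B \<Longrightarrow> u1 t < v1 (t + \<sigma>) \<and> v2 (t + \<sigma>) < u2 t) \<Longrightarrow>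
       (\<And>t. t > B \<Longrightarrow> t \<ge> R \<and> t + \<sigma> \<ge> R) \<Longrightarrow>
       kamke_le u1 u2 (\<lambda>z. v1 (z + \<sigma>)) (\<lambda>z. v2 (z + \<sigma>))"
    using kamke_le_shift_of_middle[OF L U V] by blast
  define B where "B = max R (R - \<tau> + 1)"
  obtain du1 du2 dv1 dv2 where "has_system_derivatives L u1 u2 du1 du2" "has_system_derivatives L v1 v2 dv1 dv2"
    using U V by (meson positive_heteroclinic_derivatives)
  note cu = has_system_derivatives_continuous_on[OF this(1)]
    and cv = has_system_derivatives_continuous_on[OF this(2)]
  have "continuous_on UNIV (\<lambda>z. v1 (z + \<tau>))" "continuous_on UNIV (\<lambda>z. v2 (z + \<tau>))"
    using cv by (auto intro!: continuous_on_compose2[of UNIV _ _ "\<lambda>z. z + \<tau>"] continuous_intros)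
  note cshift = continuous_on_subset[OF this(1)] continuous_on_subset[OF this(2)]
  obtain \<mu>1 \<mu>2 where \<mu>1: "\<mu>1 > 0" "\<And>t. t \<in> {-R..B} \<Longrightarrow> u1 t + \<mu>1 \<le> v1 (t + \<tau>)"
    and \<mu>2: "\<mu>2 > 0" "\<And>t. t \<in> {-R..B} \<Longrightarrow> v2 (t + \<tau>) + \<mu>2 \<le> u2 t"
    using continuous_less_on_interval_uniform[OF continuous_on_subset[OF cu(1)] cshift(1)]
      continuous_less_on_interval_uniform[OF cshift(2) continuous_on_subset[OF cu(2)]] strict
    by (metis subset_UNIV)
  obtain \<eta>1 \<eta>2 where \<eta>1: "\<eta>1 > 0"
    "\<And>t \<sigma>. t \<in> {-R..B} \<Longrightarrow> \<bar>\<sigma> - \<tau>\<bar> \<le> \<eta>1 \<Longrightarrow> \<bar>v1 (t + \<sigma>) - v1 (t + \<tau>)\<bar> < \<mu>1"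
    and \<eta>2: "\<eta>2 > 0"
    "\<And>t \<sigma>. t \<in> {-R..B} \<Longrightarrow> \<bar>\<sigma> - \<tau>\<bar> \<le> \<eta>2 \<Longrightarrow> \<bar>v2 (t + \<sigma>) - v2 (t + \<tau>)\<bar> < \<mu>2"
    using uniformly_close_shifts[OF cv(1) \<mu>1(1)] uniformly_close_shifts[OF cv(2) \<mu>2(1)] by metis
  show thesis
  proof (rule that[of "min 1 (min \<eta>1 \<eta>2)"])
    fix \<sigma> assume \<sigma>: "\<tau> - min 1 (min \<eta>1 \<eta>2) \<le> \<sigma>" "\<sigma> \<le> \<tau>"
    show "kamke_le u1 u2 (\<lambda>z. v1 (z + \<sigma>)) (\<lambda>z. v2 (z + \<sigma>))"
    proof (rule R(2))
      fix t assume "- R \<le> t" "t \<le> B"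
      moreover have "\<bar>\<sigma> - \<tau>\<bar> \<le> \<eta>1" "\<bar>\<sigma> - \<tau>\<bar> \<le> \<eta>2" using \<sigma> by auto
      ultimately show "u1 t < v1 (t + \<sigma>) \<and> v2 (t + \<sigma>) < u2 t"
        using \<eta>1(2)[of t \<sigma>] \<eta>2(2)[of t \<sigma>] \<mu>1(2)[of t] \<mu>2(2)[of t] by auto
    next
      fix t assume "t > B"
      moreover have "min 1 (min \<eta>1 \<eta>2) \<le> 1" by simp
      ultimately show "t \<ge> R \<and> t + \<sigma> \<ge> R" using \<sigma> unfolding B_def max_less_iff_conj by linarith
    qed
  qed (use \<eta>1 \<eta>2 in simp)
qed

lemma critical_shift:
  assumes L: "L > 1" and U: "positive_heteroclinic L u1 u2" and V: "positive_heteroclinic L v1 v2"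
  obtains \<tau> where "\<And>\<sigma>. \<sigma> \<ge> \<tau> \<Longrightarrow> kamke_le u1 u2 (\<lambda>z. v1 (z + \<sigma>)) (\<lambda>z. v2 (z + \<sigma>))"
    "\<And>\<tau>'. \<tau>' < \<tau> \<Longrightarrow> \<exists>\<sigma>\<ge>\<tau>'. \<not> kamke_le u1 u2 (\<lambda>z. v1 (z + \<sigma>)) (\<lambda>z. v2 (z + \<sigma>))"
proof -
  let ?ordered = "\<lambda>\<sigma>. kamke_le u1 u2 (\<lambda>z. v1 (z + \<sigma>)) (\<lambda>z. v2 (z + \<sigma>))"
  obtain dv1 dv2 where "has_system_derivatives L v1 v2 dv1 dv2"
    using V by (rule positive_heteroclinic_derivatives)
  note cv = has_system_derivatives_continuous_on[OF this]
  obtain \<tau>0 where large: "\<And>\<sigma>. \<sigma> \<ge> \<tau>0 \<Longrightarrow> ?ordered \<sigma>"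
    using kamke_le_large_shifts[OF L U V] by blast
  obtain \<tau>1 where small: "\<not> ?ordered \<tau>1"
  proof (rule not_kamke_le_some_shift)
    show "u1 0 > 0" using U unfolding positive_heteroclinic_def by blast
    show "(v1 \<longlongrightarrow> 0) at_bot" using V unfolding positive_heteroclinic_def by blast
  qed
  show thesis
    using least_upward_threshold[where P = ?ordered, OF large small kamke_le_shift_right_closed[OF cv]]
      that by blast
qed

theorem theorem1p3:
  fixes L :: real and u1 u2 v1 v2 :: "real \<Rightarrow> real"
  assumes "L > 1"
    and "admissible L u1 u2"
    and "admissible L v1 v2"
  shows "\<exists>c. \<forall>z. u1 z = v1 (z + c) \<and> u2 z = v2 (z + c)"
proof -
  have U: "positive_heteroclinic L u1 u2" and V: "positive_heteroclinic L v1 v2"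
    using assms(2,3) by (simp_all add: admissible_imp_positive_heteroclinic)
  let ?ordered = "\<lambda>\<sigma>. kamke_le u1 u2 (\<lambda>z. v1 (z + \<sigma>)) (\<lambda>z. v2 (z + \<sigma>))"
  obtain \<tau> where above: "\<And>\<sigma>. \<sigma> \<ge> \<tau> \<Longrightarrow> ?ordered \<sigma>"
    and least: "\<And>\<tau>'. \<tau>' < \<tau> \<Longrightarrow> \<exists>\<sigma>\<ge>\<tau>'. \<not> ?ordered \<sigma>"
    using critical_shift[OF assms(1) U V] by blast
  show ?thesis
  proof (cases "\<exists>z0. u1 z0 = v1 (z0 + \<tau>) \<or> u2 z0 = v2 (z0 + \<tau>)")
    case True
    then show ?thesis
      using kamke_le_touching_eq[OF _ U positive_heteroclinic_shift[OF V] above[OF order_refl]] assms(1)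
      by (metis less_trans zero_less_one)
  next
    case False
    then have "\<And>z. u1 z < v1 (z + \<tau>) \<and> v2 (z + \<tau>) < u2 z"
      using above[OF order_refl] unfolding kamke_le_def by (metis order.not_eq_order_implies_strict)
    then obtain \<eta> where "\<eta> > 0" and "\<And>\<sigma>. \<tau> - \<eta> \<le> \<sigma> \<Longrightarrow> \<sigma> \<le> \<tau> \<Longrightarrow> ?ordered \<sigma>"
      using kamke_le_strict_shift_perturb[OF assms(1) U V] by blast
    moreover obtain \<sigma> where "\<sigma> \<ge> \<tau> - \<eta>" "\<not> ?ordered \<sigma>"
      using least[of "\<tau> - \<eta>"] \<open>\<eta> > 0\<close> by auto
    ultimately show ?thesis using above by (cases "\<sigma> \<le> \<tau>") auto
  qed
qed

end
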